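(* Let $n=p^{\alpha}$ where $p$ is a prime and $\alpha\geq 1$ is an integer. Then $\mathbb{AG}(\mathbb{Z}_n)$ is perfect.
   Context: For a commutative ring $R$ with unity, the annihilating-ideal graph $\mathbb{AG}(R)$ is the simple graph whose vertex set is the set of all non-zero ideals of $R$ with non-zero annihilator, two distinct vertices $I,J$ being adjacent if and only if $IJ=0$. A graph $G$ is perfect if $\omega(H)=\chi(H)$ for every induced subgraph $H$ of $G$. *)

theory Defs
  imports "HOL-Algebra.Ideal_Product" "HOL-Number_Theory.Residues"
begin

definition is_clique :: "('v \<Rightarrow> 'v \<Rightarrow> bool) \<Rightarrow> 'v set \<Rightarrow> bool" where
  "is_clique E C \<longleftrightarrow> (\<forall>x\<in>C. \<forall>y\<in>C. x \<noteq> y \<longrightarrow> E x y)"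

text \<open>Clique number of the graph with vertex set V (assumed finite).\<close>
definition clique_number :: "'v set \<Rightarrow> ('v \<Rightarrow> 'v \<Rightarrow> bool) \<Rightarrow> nat" where
  "clique_number V E = Max (card ` {C. C \<subseteq> V \<and> is_clique E C})"

definition is_colouring :: "'v set \<Rightarrow> ('v \<Rightarrow> 'v \<Rightarrow> bool) \<Rightarrow> nat \<Rightarrow> ('v \<Rightarrow> nat) \<Rightarrow> bool" where
  "is_colouring V E k f \<longleftrightarrow> f ` V \<subseteq> {..<k} \<and>
     (\<forall>x\<in>V. \<forall>y\<in>V. x \<noteq> y \<longrightarrow> E x y \<longrightarrow> f x \<noteq> f y)"

definition chromatic_number :: "'v set \<Rightarrow> ('v \<Rightarrow> 'v \<Rightarrow> bool) \<Rightarrow> nat" where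
  "chromatic_number V E = (LEAST k. \<exists>f. is_colouring V E k f)"

definition perfect_graph :: "'v set \<Rightarrow> ('v \<Rightarrow> 'v \<Rightarrow> bool) \<Rightarrow> bool" where
  "perfect_graph V E \<longleftrightarrow> (\<forall>S. S \<subseteq> V \<longrightarrow> clique_number S E = chromatic_number S E)"

definition annihilator :: "('a, 'b) ring_scheme \<Rightarrow> 'a set \<Rightarrow> 'a set" where
  "annihilator R I = {x \<in> carrier R. \<forall>i\<in>I. x \<otimes>\<^bsub>R\<^esub> i = \<zero>\<^bsub>R\<^esub>}"

definition AG_vertices :: "('a, 'b) ring_scheme \<Rightarrow> 'a set set" where
  "AG_vertices R = {I. ideal I R \<and> I \<noteq> {\<zero>\<^bsub>R\<^esub>} \<and> annihilator R I \<noteq> {\<zero>\<^bsub>R\<^esub>}}"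

definition AG_adj :: "('a, 'b) ring_scheme \<Rightarrow> 'a set \<Rightarrow> 'a set \<Rightarrow> bool" where
  "AG_adj R I J \<longleftrightarrow> I \<noteq> J \<and> ideal_prod R I J = {\<zero>\<^bsub>R\<^esub>}"

end

theory Submission
  imports Defs
begin

text \<open>For n = p^\<alpha> the gcd of any residue with n is a power of p, so of any two residues one
  divides the other and the ideals of the residue ring form a chain. On a chain, the relation
  IJ = 0 is symmetric and downward closed, which makes the graph a threshold graph: the ideals
  I with I^2 = 0 form a clique B, every edge meets B, and a vertex outside B can be coloured like
  the largest element of B or, if it is adjacent to that element, like one fixed such vertex,
  which together with B is again a clique.\<close>

lemma clique_card_le_colours:
  assumes "is_colouring S E k f" "C \<subseteq> S" "is_clique E C" "finite C"
  shows "card C \<le> k"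
proof -
  have "inj_on f C"
    using assms unfolding is_colouring_def is_clique_def inj_on_def by blast
  moreover have "f ` C \<subseteq> {..<k}"
    using assms unfolding is_colouring_def by blast
  ultimately show ?thesis
    by (metis card_image card_lessThan card_mono finite_lessThan)
qed

lemma clique_number_eq_chromatic_number:
  assumes "finite S" "is_colouring S E k f" "C \<subseteq> S" "is_clique E C" "card C = k"
  shows "clique_number S E = chromatic_number S E"
proof -
  have "clique_number S E = k"
    unfolding clique_number_def
  proof (rule Max_eqI)
    show "finite (card ` {C. C \<subseteq> S \<and> is_clique E C})"
      using \<open>finite S\<close> by simp
    show "k \<in> card ` {C. C \<subseteq> S \<and> is_clique E C}"
      using assms by auto
  next
    fix c assume "c \<in> card ` {C. C \<subseteq> S \<and> is_clique E C}"
    then show "c \<le> k"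
      using clique_card_le_colours[OF assms(2)] \<open>finite S\<close> finite_subset by blast
  qed
  moreover have "chromatic_number S E = k"
    unfolding chromatic_number_def
  proof (rule Least_equality)
    show "\<exists>f. is_colouring S E k f"
      using assms by blast
  next
    fix l assume "\<exists>f. is_colouring S E l f"
    then show "k \<le> l"
      using clique_card_le_colours assms finite_subset by metis
  qed
  ultimately show ?thesis
    by simp
qed

lemma clique_number_eq_chromatic_number_if_colouring_by_clique:
  assumes "finite S" "K \<subseteq> S" "is_clique E K" "g ` S \<subseteq> K"
    and "\<And>x y. x \<in> S \<Longrightarrow> y \<in> S \<Longrightarrow> x \<noteq> y \<Longrightarrow> E x y \<Longrightarrow> g x \<noteq> g y"
  shows "clique_number S E = chromatic_number S E"
proof -
  have "finite K"
    using assms(1,2) finite_subset by blast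
  then obtain c where c: "bij_betw c K {0..<card K}"
    using ex_bij_betw_finite_nat by blast
  have "is_colouring S E (card K) (c \<circ> g)"
    unfolding is_colouring_def
  proof (intro conjI ballI impI)
    have "(c \<circ> g) ` S \<subseteq> c ` K"
      using assms(4) by (auto simp: image_comp[symmetric])
    then show "(c \<circ> g) ` S \<subseteq> {..<card K}"
      using c by (auto simp: bij_betw_def)
  next
    fix x y assume "x \<in> S" "y \<in> S" "x \<noteq> y" "E x y"
    then have "g x \<noteq> g y" "g x \<in> K" "g y \<in> K"
      using assms(4,5) by auto
    then show "(c \<circ> g) x \<noteq> (c \<circ> g) y"
      using c by (auto simp: bij_betw_def dest: inj_onD)
  qed
  then show ?thesis
    using clique_number_eq_chromatic_number assms(1-3) by blast
qed

lemma threshold_clique_number_eq_chromatic_number: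
  fixes S :: "'a::order set"
  assumes finite: "finite S"
    and total: "\<And>x y. x \<in> S \<Longrightarrow> y \<in> S \<Longrightarrow> x \<le> y \<or> y \<le> x"
    and sym: "\<And>x y. x \<in> S \<Longrightarrow> y \<in> S \<Longrightarrow> Z x y \<Longrightarrow> Z y x"
    and down: "\<And>x x' y. x \<in> S \<Longrightarrow> x' \<in> S \<Longrightarrow> y \<in> S \<Longrightarrow> x \<le> x' \<Longrightarrow> Z x' y \<Longrightarrow> Z x y"
    and adj: "\<And>x y. x \<in> S \<Longrightarrow> y \<in> S \<Longrightarrow> E x y \<longleftrightarrow> x \<noteq> y \<and> Z x y"
  shows "clique_number S E = chromatic_number S E"
proof -
  define B where "B = {x \<in> S. Z x x}"
  have below_loop: "Z x y" if "x \<in> S" "y \<in> S" "x \<le> y" "Z y y" for x y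
    using down that by blast
  have edge_meets_B: "x \<in> B \<or> y \<in> B" if "x \<in> S" "y \<in> S" "Z x y" for x y
    using total[of x y] down[of x y x] down[of y x y] sym that unfolding B_def by blast
  have B_related: "Z x y" if "x \<in> B" "y \<in> B" for x y
    using total[of x y] below_loop[of x y] below_loop[of y x] sym that unfolding B_def by blast
  show ?thesis
  proof (cases "B = {}")
    case True
    define g where "g x = (SOME s. s \<in> S)" for x :: 'a
    show ?thesis
    proof (rule clique_number_eq_chromatic_number_if_colouring_by_clique[OF finite])
      show "g ` S \<subseteq> g ` S" "is_clique E (g ` S)"
        by (auto simp: g_def is_clique_def)
      show "g ` S \<subseteq> S"
        by (auto simp: g_def intro: someI)
      show "g x \<noteq> g y" if "x \<in> S" "y \<in> S" "x \<noteq> y" "E x y" for x y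
        using that adj edge_meets_B \<open>B = {}\<close> by blast
    qed
  next
    case False
    have "B \<subseteq> S"
      unfolding B_def by blast
    obtain m where "m \<in> B" and m_maximal: "\<And>b. b \<in> B \<Longrightarrow> m \<le> b \<Longrightarrow> m = b"
      using finite_has_maximal[of B] \<open>B \<noteq> {}\<close> \<open>B \<subseteq> S\<close> finite finite_subset by blast
    have m_max: "b \<le> m" if "b \<in> B" for b
      using total[of b m] m_maximal[OF that] that \<open>m \<in> B\<close> \<open>B \<subseteq> S\<close> by blast
    define s where "s = (if \<exists>t \<in> S - B. Z t m then SOME t. t \<in> S - B \<and> Z t m else m)"
    have s_cases: "s \<in> S - B \<and> Z s m \<or> (s = m \<and> (\<forall>t \<in> S - B. \<not> Z t m))"
      unfolding s_def using someI_ex[of "\<lambda>t. t \<in> S - B \<and> Z t m"] by auto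
    define g where "g x = (if x \<in> B then x else if Z x m then s else m)" for x
    have g_separates: "g x \<noteq> g y" if "x \<in> B" "y \<in> S - B" "Z y x" for x y
      using that s_cases unfolding g_def by auto
    have K_sub: "insert s B \<subseteq> S"
      using s_cases \<open>m \<in> B\<close> \<open>B \<subseteq> S\<close> by blast
    have s_related: "Z s b" if "s \<notin> B" "b \<in> B" for b
      using that s_cases down[of b m s] m_max \<open>m \<in> B\<close> \<open>B \<subseteq> S\<close> sym by blast
    have K_related: "Z x y" if "x \<in> insert s B" "y \<in> insert s B" "x \<noteq> y" for x y
      using that B_related s_related sym K_sub by blast
    show ?thesis
    proof (rule clique_number_eq_chromatic_number_if_colouring_by_clique[OF finite K_sub])
      show "g ` S \<subseteq> insert s B"
        using \<open>m \<in> B\<close> unfolding g_def by auto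
      show "is_clique E (insert s B)"
        unfolding is_clique_def using adj K_related K_sub by blast
    next
      fix x y assume "x \<in> S" "y \<in> S" "x \<noteq> y" "E x y"
      then have "Z x y"
        using adj by blast
      then consider "x \<in> B" "y \<in> B" | "x \<in> B" "y \<in> S - B" | "y \<in> B" "x \<in> S - B"
        using edge_meets_B \<open>x \<in> S\<close> \<open>y \<in> S\<close> by blast
      then show "g x \<noteq> g y"
      proof cases
        case 1
        then show ?thesis
          using \<open>x \<noteq> y\<close> by (simp add: g_def)
      next
        case 2
        then show ?thesis
          using g_separates sym \<open>Z x y\<close> \<open>x \<in> S\<close> \<open>y \<in> S\<close> by blast
      next
        case 3
        then show ?thesis
          using g_separates \<open>Z x y\<close> by metis
      qed
    qed
  qed
qed

lemma dvd_total_if_dvd_prime_power: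
  fixes p :: "'a::factorial_semiring_multiplicative"
  assumes "prime p" "a dvd p ^ n" "b dvd p ^ n"
  shows "a dvd b \<or> b dvd a"
proof -
  obtain i where i: "normalize a = p ^ i"
    using divides_primepow[OF assms(1,2)] by blast
  obtain j where j: "normalize b = p ^ j"
    using divides_primepow[OF assms(1,3)] by blast
  have "p ^ i dvd p ^ j \<or> p ^ j dvd p ^ i"
    by (cases "i \<le> j") (simp_all add: le_imp_power_dvd)
  then have "normalize a dvd normalize b \<or> normalize b dvd normalize a"
    by (simp only: i j)
  then show ?thesis
    by simp
qed

lemma (in residues) divides_if_gcd_dvd:
  assumes "y \<in> carrier R" "gcd x m dvd y"
  shows "\<exists>c \<in> carrier R. y = x \<otimes> c"
proof -
  obtain u v where uv: "u * x + v * m = gcd x m"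
    using bezout_int by blast
  obtain t where t: "y = gcd x m * t"
    using assms(2) by blast
  have "y = y mod m"
    using assms(1) by (simp add: res_carrier_eq)
  also have "\<dots> = (x * (u * t) + m * (v * t)) mod m"
    by (simp add: t uv[symmetric] algebra_simps)
  also have "\<dots> = x \<otimes> ((u * t) mod m)"
    by (simp add: res_mult_eq mod_mult_right_eq)
  finally show ?thesis
    by blast
qed

lemma (in residues) divides_total_if_prime_power:
  assumes "prime p" "m = p ^ a" "x \<in> carrier R" "y \<in> carrier R"
  shows "(\<exists>c \<in> carrier R. y = x \<otimes> c) \<or> (\<exists>c \<in> carrier R. x = y \<otimes> c)"
proof -
  have "gcd x m dvd p ^ a" "gcd y m dvd p ^ a"
    using \<open>m = p ^ a\<close> by simp_all
  then have "gcd x m dvd gcd y m \<or> gcd y m dvd gcd x m"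
    by (rule dvd_total_if_dvd_prime_power[OF \<open>prime p\<close>])
  then have "gcd x m dvd y \<or> gcd y m dvd x"
    using dvd_trans gcd_dvd1 by blast
  then show ?thesis
    using divides_if_gcd_dvd assms(3,4) by blast
qed

lemma ideals_chain_if_divides_total:
  assumes "\<And>x y. x \<in> carrier R \<Longrightarrow> y \<in> carrier R \<Longrightarrow>
      (\<exists>c \<in> carrier R. y = x \<otimes>\<^bsub>R\<^esub> c) \<or> (\<exists>c \<in> carrier R. x = y \<otimes>\<^bsub>R\<^esub> c)"
    and "ideal I R" "ideal J R"
  shows "I \<subseteq> J \<or> J \<subseteq> I"
proof (rule ccontr)
  assume "\<not> (I \<subseteq> J \<or> J \<subseteq> I)"
  then obtain x y where "x \<in> I" "x \<notin> J" "y \<in> J" "y \<notin> I"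
    by blast
  have "x \<in> carrier R" "y \<in> carrier R"
    using ideal.Icarr[OF assms(2) \<open>x \<in> I\<close>] ideal.Icarr[OF assms(3) \<open>y \<in> J\<close>] .
  then have "(\<exists>c \<in> carrier R. y = x \<otimes>\<^bsub>R\<^esub> c) \<or> (\<exists>c \<in> carrier R. x = y \<otimes>\<^bsub>R\<^esub> c)"
    by (rule assms(1))
  then show False
  proof (elim disjE bexE)
    fix c assume "c \<in> carrier R" "y = x \<otimes>\<^bsub>R\<^esub> c"
    then have "y \<in> I"
      using ideal.I_r_closed[OF assms(2) \<open>x \<in> I\<close>] by simp
    with \<open>y \<notin> I\<close> show False ..
  next
    fix c assume "c \<in> carrier R" "x = y \<otimes>\<^bsub>R\<^esub> c"
    then have "x \<in> J"
      using ideal.I_r_closed[OF assms(3) \<open>y \<in> J\<close>] by simp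
    with \<open>x \<notin> J\<close> show False ..
  qed
qed

lemma ideal_prod_mono:
  assumes "I \<subseteq> I'" "J \<subseteq> J'"
  shows "I \<cdot>\<^bsub>R\<^esub> J \<subseteq> I' \<cdot>\<^bsub>R\<^esub> J'"
proof
  fix s assume "s \<in> I \<cdot>\<^bsub>R\<^esub> J"
  then show "s \<in> I' \<cdot>\<^bsub>R\<^esub> J'"
    by (induct s rule: ideal_prod.induct) (use assms in \<open>auto intro: ideal_prod.intros\<close>)
qed

lemma threshold_perfect_graph:
  fixes V :: "'a::order set"
  assumes "finite V"
    and "\<And>x y. x \<in> V \<Longrightarrow> y \<in> V \<Longrightarrow> x \<le> y \<or> y \<le> x"
    and "\<And>x y. x \<in> V \<Longrightarrow> y \<in> V \<Longrightarrow> Z x y \<Longrightarrow> Z y x"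
    and "\<And>x x' y. x \<in> V \<Longrightarrow> x' \<in> V \<Longrightarrow> y \<in> V \<Longrightarrow> x \<le> x' \<Longrightarrow> Z x' y \<Longrightarrow> Z x y"
    and "\<And>x y. x \<in> V \<Longrightarrow> y \<in> V \<Longrightarrow> E x y \<longleftrightarrow> x \<noteq> y \<and> Z x y"
  shows "perfect_graph V E"
  unfolding perfect_graph_def
proof (intro allI impI)
  fix S assume "S \<subseteq> V"
  show "clique_number S E = chromatic_number S E"
  proof (rule threshold_clique_number_eq_chromatic_number[where Z = Z])
    show "finite S"
      using \<open>finite V\<close> \<open>S \<subseteq> V\<close> finite_subset by blast
    show "x \<le> y \<or> y \<le> x" if "x \<in> S" "y \<in> S" for x y
      using assms(2) that \<open>S \<subseteq> V\<close> by blast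
    show "Z y x" if "x \<in> S" "y \<in> S" "Z x y" for x y
      using assms(3) that \<open>S \<subseteq> V\<close> by blast
    show "Z x y" if "x \<in> S" "x' \<in> S" "y \<in> S" "x \<le> x'" "Z x' y" for x x' y
      using assms(4) that \<open>S \<subseteq> V\<close> by blast
    show "E x y \<longleftrightarrow> x \<noteq> y \<and> Z x y" if "x \<in> S" "y \<in> S" for x y
      using assms(5) that \<open>S \<subseteq> V\<close> by blast
  qed
qed

lemma (in cring) AG_perfect_if_ideals_chain:
  assumes "finite (carrier R)"
    and "\<And>I J. ideal I R \<Longrightarrow> ideal J R \<Longrightarrow> I \<subseteq> J \<or> J \<subseteq> I"
  shows "perfect_graph (AG_vertices R) (AG_adj R)"
proof -
  have ideal: "ideal I R" if "I \<in> AG_vertices R" for I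
    using that by (simp add: AG_vertices_def)
  show ?thesis
  proof (rule threshold_perfect_graph[where Z = "\<lambda>I J. I \<cdot> J = {\<zero>}"])
    have "I \<subseteq> carrier R" if "I \<in> AG_vertices R" for I
      using ideal.Icarr[OF ideal[OF that]] by blast
    then have "AG_vertices R \<subseteq> Pow (carrier R)"
      by blast
    then show "finite (AG_vertices R)"
      using assms(1) finite_subset by blast
  next
    fix I J assume "I \<in> AG_vertices R" "J \<in> AG_vertices R"
    then have "ideal I R" "ideal J R"
      by (simp_all add: ideal)
    then show "I \<subseteq> J \<or> J \<subseteq> I" and "I \<cdot> J = {\<zero>} \<Longrightarrow> J \<cdot> I = {\<zero>}"
      using assms(2) ideal_prod_commute by simp_all
  next
    fix I I' J assume "I \<in> AG_vertices R" "J \<in> AG_vertices R" "I \<subseteq> I'" "I' \<cdot> J = {\<zero>}"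
    have "I \<cdot> J \<subseteq> {\<zero>}"
      using ideal_prod_mono[OF \<open>I \<subseteq> I'\<close> order_refl, where R = R and J = J] \<open>I' \<cdot> J = {\<zero>}\<close> by simp
    moreover have "ideal (I \<cdot> J) R"
      using ideal_prod_is_ideal ideal \<open>I \<in> AG_vertices R\<close> \<open>J \<in> AG_vertices R\<close> by blast
    then have "\<zero> \<in> I \<cdot> J"
      by (simp add: additive_subgroup.zero_closed ideal.axioms(1))
    ultimately show "I \<cdot> J = {\<zero>}"
      by blast
  next
    show "AG_adj R I J \<longleftrightarrow> I \<noteq> J \<and> I \<cdot> J = {\<zero>}" for I J
      unfolding AG_adj_def ..
  qed
qed

theorem lemma8:
  fixes p \<alpha> :: nat
  assumes "prime p" and "\<alpha> \<ge> 1"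
  shows "perfect_graph (AG_vertices (residue_ring (int (p ^ \<alpha>))))
                       (AG_adj (residue_ring (int (p ^ \<alpha>))))"
proof -
  have "p > 1"
    using assms(1) prime_gt_1_nat by blast
  then have "int (p ^ \<alpha>) > 1"
    using assms(2) by (simp add: one_less_power)
  then interpret residues "int (p ^ \<alpha>)" "residue_ring (int (p ^ \<alpha>))"
    by unfold_locales
  have "prime (int p)" "int (p ^ \<alpha>) = int p ^ \<alpha>"
    using assms(1) by simp_all
  note divides_total = divides_total_if_prime_power[OF this]
  show ?thesis
  proof (rule AG_perfect_if_ideals_chain)
    show "finite (carrier (residue_ring (int (p ^ \<alpha>))))"
      by (rule finite)
    show "I \<subseteq> J \<or> J \<subseteq> I"
      if "ideal I (residue_ring (int (p ^ \<alpha>)))" "ideal J (residue_ring (int (p ^ \<alpha>)))" for I J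
      by (rule ideals_chain_if_divides_total[OF divides_total that])
  qed
qed

end
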